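(* Let $J\subseteq[n]$ and let $\pi,\hat\pi\in S_J$ be joined by an edge of the bridge polytope $\mathrm{Br}_J$, where $\hat\pi=(i\,\ell)\pi$ for some $i<\ell$. Then each of $i+1,i+2,\dots,\ell-1$ is a fixed point of both $\pi$ and $\hat\pi$.
   Context: For $J\subseteq[n]$, $S_J=\{\pi\in S_n:\ \pi(j)\ge j \text{ for } j\in J,\ \pi(j)\le j \text{ for } j\notin J\}$ and $\mathrm{Br}_J=\operatorname{conv}\{(\pi(1),\dots,\pi(n)):\pi\in S_J\}\subset\mathbb{R}^n$, each $\pi\in S_J$ being identified with the vertex $(\pi(1),\dots,\pi(n))$. For a transposition $(i\,\ell)$, $(i\,\ell)\pi$ denotes $(i\,\ell)\circ\pi$, the permutation obtained from $\pi$ by swapping the values $i$ and $\ell$. *)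

theory Defs
  imports "HOL-Analysis.Analysis" "HOL-Combinatorics.Transposition"
begin

text \<open>The ground set [n] is modelled by a finite linearly ordered type 'n
  (so n = CARD('n)); a permutation of [n] is a function permuting UNIV.
  The k-th smallest element of 'n corresponds to the number k in [n].\<close>

definition num :: "'n::{finite,linorder} \<Rightarrow> nat" where
  "num x = card {y. y \<le> x}"

definition S_J :: "'n::{finite,linorder} set \<Rightarrow> ('n \<Rightarrow> 'n) set" where
  "S_J J = {p. p permutes (UNIV :: 'n set) \<and>
               (\<forall>j\<in>J. j \<le> p j) \<and> (\<forall>j. j \<notin> J \<longrightarrow> p j \<le> j)}"

definition vert :: "('n::{finite,linorder} \<Rightarrow> 'n) \<Rightarrow> real ^ ('n::{finite,linorder})" where
  "vert p = (\<chi> j. real (num (p j)))"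

definition Br :: "'n::{finite,linorder} set \<Rightarrow> (real ^ ('n::{finite,linorder})) set" where
  "Br J = convex hull (vert ` S_J J)"

definition joined_by_edge :: "'a::real_vector set \<Rightarrow> 'a \<Rightarrow> 'a \<Rightarrow> bool" where
  "joined_by_edge P a b \<longleftrightarrow> a \<noteq> b \<and> closed_segment a b face_of P"

end

theory Submission
  imports Defs
begin

text \<open>Suppose some k with i < k < l is not fixed. From \<pi> and \<pi>' = (i l)\<pi> one builds further
  vertices of Br_J by composing with transpositions; a positive convex combination of midpoints of
  such pairs equals the midpoint of [\<pi>, \<pi>'], while one of the vertices used lies off the line
  through \<pi> and \<pi>', so [\<pi>, \<pi>'] cannot be a face. The admissible swaps exist in two situations:
  either some value strictly between i and l sits at a position outside (i, l), or \<pi> permutes the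
  positions in (i, l) non-trivially, and then it has a crossing pair y \<le> \<pi> x < \<pi> y \<le> x.\<close>

lemma strict_mono_num: "strict_mono (num :: 'n::{finite,linorder} \<Rightarrow> nat)"
proof (rule strict_monoI)
  fix x y :: 'n
  assume "x < y"
  then have "{z. z \<le> x} \<subset> {z. z \<le> y}"
    by (auto dest: leD intro: order.trans)
  then show "num x < num y"
    unfolding num_def by (intro psubset_card_mono) auto
qed

lemma vert_comp_transpose:
  "vert (p \<circ> Transposition.transpose a c)
     = vert p + (real (num (p c)) - real (num (p a))) *\<^sub>R (axis a 1 - axis c 1)"
  by (auto simp: vec_eq_iff vert_def axis_def Transposition.transpose_def)

lemma vert_notin_closed_segment:
  assumes "q x = p x" and "r x \<noteq> p x"
  shows "vert r \<notin> closed_segment (vert p) (vert q)"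
proof
  assume "vert r \<in> closed_segment (vert p) (vert q)"
  then obtain u where "vert r = (1 - u) *\<^sub>R vert p + u *\<^sub>R vert q"
    by (auto simp: in_segment)
  then have "vert r $ x = (1 - u) * vert p $ x + u * vert q $ x"
    by simp
  then have "real (num (r x)) = real (num (p x))"
    using assms(1) by (simp add: vert_def algebra_simps)
  with assms(2) show False
    by (simp add: strict_mono_eq[OF strict_mono_num])
qed

lemma vert_in_Br: "r \<in> S_J J \<Longrightarrow> vert r \<in> Br J"
  unfolding Br_def by (intro hull_inc imageI)

lemma midpoint_vert_in_Br:
  "r \<in> S_J J \<Longrightarrow> s \<in> S_J J \<Longrightarrow> midpoint (vert r) (vert s) \<in> Br J"
  using midpoints_in_convex_hull vert_in_Br unfolding Br_def by blast

definition allowed :: "'n::{finite,linorder} set \<Rightarrow> 'n \<Rightarrow> 'n \<Rightarrow> bool" where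
  "allowed J z v \<longleftrightarrow> (z \<in> J \<longrightarrow> z \<le> v) \<and> (z \<notin> J \<longrightarrow> v \<le> z)"

lemma S_J_iff_allowed:
  "p \<in> S_J J \<longleftrightarrow> p permutes UNIV \<and> (\<forall>z. allowed J z (p z))"
  unfolding S_J_def allowed_def by auto

lemma allowed_between:
  "allowed J z u \<Longrightarrow> allowed J z w \<Longrightarrow> u \<le> v \<Longrightarrow> v \<le> w \<Longrightarrow> allowed J z v"
  unfolding allowed_def by (meson order_trans)

lemma S_J_comp_transpose:
  assumes "p \<in> S_J J" and "allowed J x (p y)" and "allowed J y (p x)"
  shows "p \<circ> Transposition.transpose x y \<in> S_J J"
  using assms unfolding S_J_iff_allowed
  by (auto simp: Transposition.transpose_def intro: permutes_compose permutes_swap_id)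

lemma convex_Br: "convex (Br J)"
  unfolding Br_def by simp

lemma face_of_convex_combination_mem:
  fixes F S :: "'a::real_vector set"
  assumes "F face_of S" "x \<in> S" "y \<in> S" "0 < u" "u < 1" "u *\<^sub>R x + (1 - u) *\<^sub>R y \<in> F"
  shows "x \<in> F"
proof (cases "x = y")
  case True
  then show ?thesis using assms(6) by (simp add: scaleR_left_distrib[symmetric])
next
  case False
  have "u *\<^sub>R x + (1 - u) *\<^sub>R y \<in> open_segment y x"
    unfolding in_segment using False assms(4,5) by (auto intro!: exI[of _ u])
  then show ?thesis using face_ofD[OF assms(1) _ assms(3,2,6)] by blast
qed

lemma face_of_convex_combination3_mem:
  fixes F S :: "'a::real_vector set"
  assumes "F face_of S" "convex S" "x \<in> S" "y \<in> S" "z \<in> S"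
    and "0 < u" "0 < v" "0 < w" "u + v + w = 1"
    and "u *\<^sub>R x + v *\<^sub>R y + w *\<^sub>R z \<in> F"
  shows "x \<in> F"
proof -
  have vw: "v + w = 1 - u" using assms(9) by simp
  define y' where "y' = (v / (1 - u)) *\<^sub>R y + (w / (1 - u)) *\<^sub>R z"
  have "y' \<in> S"
    unfolding y'_def using assms(6-9) vw
    by (intro convexD[OF assms(2,4,5)]) (auto simp: add_divide_distrib[symmetric])
  moreover have "u *\<^sub>R x + (1 - u) *\<^sub>R y' = u *\<^sub>R x + v *\<^sub>R y + w *\<^sub>R z"
    unfolding y'_def using assms(6-8) vw by (simp add: scaleR_add_right add.assoc)
  moreover have "u < 1" using assms(7-9) by simp
  ultimately show ?thesis
    using face_of_convex_combination_mem[OF assms(1,3) _ assms(6)] assms(10) by metis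
qed

lemma face_of_midpoint_mem:
  fixes F S :: "'a::real_vector set"
  assumes "F face_of S" "x \<in> S" "y \<in> S" "midpoint x y \<in> F"
  shows "x \<in> F"
  using face_of_convex_combination_mem[OF assms(1-3), of "1/2"] assms(4)
  by (simp add: midpoint_def scaleR_add_right)

lemma midpoint_shifted_combination2:
  fixes P Q d1 d2 d3 :: "'a::real_inner" and u v w :: real
  assumes "u * v + (1 - u) * w = 0"
  shows "u *\<^sub>R midpoint (P + v *\<^sub>R (d1 - d3)) (Q + v *\<^sub>R (d2 - d3))
       + (1 - u) *\<^sub>R midpoint (P + w *\<^sub>R (d2 - d3)) (Q + w *\<^sub>R (d1 - d3)) = midpoint P Q"
    (is "?l = ?r")
proof -
  have "?l \<bullet> z = ?r \<bullet> z" for z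
    unfolding midpoint_def inner_add_left inner_diff_left inner_scaleR_left
    using assms by (simp add: field_simps) algebra
  then show ?thesis using vector_eq_rdot by blast
qed

lemma midpoint_shifted_combination3:
  fixes P Q d1 d2 d3 d4 :: "'a::real_inner" and w1 w2 w3 u1 u2 u3 :: real
  assumes "w1 + w2 + w3 = 1" and "w1 * u1 = w3 * u3" and "w2 * u2 = - (w3 * u3)"
  shows "w1 *\<^sub>R midpoint (P + u1 *\<^sub>R (d1 - d3)) (Q + u1 *\<^sub>R (d2 - d3))
       + w2 *\<^sub>R midpoint (P + u2 *\<^sub>R (d2 - d4)) (Q + u2 *\<^sub>R (d1 - d4))
       + w3 *\<^sub>R midpoint (P + u3 *\<^sub>R (d3 - d4)) (Q + u3 *\<^sub>R (d3 - d4)) = midpoint P Q"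
    (is "?l = ?r")
proof -
  have "?l \<bullet> z = ?r \<bullet> z" for z
    unfolding midpoint_def inner_add_left inner_diff_left inner_scaleR_left
    using assms by (simp add: field_simps) algebra
  then show ?thesis using vector_eq_rdot by blast
qed

lemma inverse_proportional_weights:
  fixes \<alpha> \<beta> \<gamma> :: real
  assumes "0 < \<alpha>" "0 < \<beta>" "0 < \<gamma>"
  obtains w1 w2 w3 where "0 < w1" "0 < w2" "0 < w3" "w1 + w2 + w3 = 1"
    "w1 * \<alpha> = w3 * \<gamma>" "w2 * \<beta> = w3 * \<gamma>"
proof
  define s where "s = inverse \<alpha> + inverse \<beta> + inverse \<gamma>"
  have s: "0 < s" using assms unfolding s_def by (simp add: add_pos_pos)
  show "0 < inverse \<alpha> / s" "0 < inverse \<beta> / s" "0 < inverse \<gamma> / s"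
    using assms s by simp_all
  show "inverse \<alpha> / s + inverse \<beta> / s + inverse \<gamma> / s = 1"
    using s unfolding s_def by (simp add: add_divide_distrib[symmetric])
  show "inverse \<alpha> / s * \<alpha> = inverse \<gamma> / s * \<gamma>" "inverse \<beta> / s * \<beta> = inverse \<gamma> / s * \<gamma>"
    using assms by simp_all
qed

lemma bij_vimage_subset_imp_eq:
  assumes "bij p" "finite A" "p -` A \<subseteq> A"
  shows "p -` A = A"
proof -
  have "card (p -` A) = card A"
    using assms(1) by (intro card_vimage_inj) (auto simp: bij_def)
  then show ?thesis using assms(2,3) by (intro card_subset_eq) auto
qed

lemma permutation_crossing_pair:
  fixes p :: "'a::linorder \<Rightarrow> 'a"
  assumes "bij p" "finite A" "p -` A = A" "k \<in> A" "p k \<noteq> k"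
  obtains x y where "p x \<in> A" "p y \<in> A" "y \<le> p x" "p x < p y" "p y \<le> x"
proof -
  have inj: "inj p" using assms(1) by (rule bij_is_inj)
  have A_iff: "p z \<in> A \<longleftrightarrow> z \<in> A" for z using assms(3) by blast
  define M where "M = {z \<in> A. p z \<noteq> z}"
  define y where "y = Min M"
  have "y \<in> M" unfolding y_def M_def using assms(2,4,5) by (intro Min_in) auto
  then have y: "y \<in> A" "p y \<noteq> y" unfolding M_def by auto
  have fixed_below: "p z = z" if "z \<in> A" "z < y" for z
    using that Min_le[of M z] assms(2) unfolding M_def y_def by fastforce
  have y_less: "y < p y"
  proof (rule ccontr)
    assume "\<not> y < p y"
    then have "p (p y) = p y" using fixed_below y A_iff by auto
    then show False using injD[OF inj] y(2) by blast
  qed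
  txt \<open>The block [y, p y) loses y under p, so some x outside it is mapped into it; as points
    below the least moved point y are fixed, x lies beyond p y.\<close>
  define W where "W = {z \<in> A. y \<le> z \<and> z < p y}"
  have "\<not> p -` W \<subseteq> W"
  proof
    assume "p -` W \<subseteq> W"
    then have "p -` W = W" using assms(1,2) unfolding W_def by (intro bij_vimage_subset_imp_eq) auto
    moreover have "y \<in> W" using y y_less unfolding W_def by simp
    ultimately show False unfolding W_def by auto
  qed
  then obtain x where px: "p x \<in> W" and x: "x \<notin> W" by blast
  have x_in: "x \<in> A" using px A_iff unfolding W_def by blast
  have "p y \<le> x"
  proof (rule ccontr)
    assume "\<not> p y \<le> x"
    then have "x < y" using x x_in unfolding W_def by auto
    then show False using fixed_below[OF x_in] px x by auto
  qed
  with px y A_iff show ?thesis using that unfolding W_def by auto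
qed

text \<open>Here \<pi>' = (i l)\<pi> appears as \<pi>(a b), where a and b are the positions of i and l.\<close>

locale transposition_edge =
  fixes J :: "'n::{finite,linorder} set" and p :: "'n \<Rightarrow> 'n" and a b :: 'n
  assumes p_in_S_J: "p \<in> S_J J"
    and q_in_S_J: "p \<circ> Transposition.transpose a b \<in> S_J J"
    and values_less: "p a < p b"
    and edge_face: "closed_segment (vert p) (vert (p \<circ> Transposition.transpose a b)) face_of Br J"
begin

abbreviation q where
  "q \<equiv> p \<circ> Transposition.transpose a b"

abbreviation edge where
  "edge \<equiv> closed_segment (vert p) (vert q)"

lemma q_apply: "q a = p b" "q b = p a" "z \<noteq> a \<Longrightarrow> z \<noteq> b \<Longrightarrow> q z = p z"
  by (auto simp: Transposition.transpose_def)

lemma allowed_a: "p a \<le> v \<Longrightarrow> v \<le> p b \<Longrightarrow> allowed J a v"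
  using p_in_S_J q_in_S_J q_apply(1) unfolding S_J_iff_allowed
  by (metis allowed_between)

lemma allowed_b: "p a \<le> v \<Longrightarrow> v \<le> p b \<Longrightarrow> allowed J b v"
  using p_in_S_J q_in_S_J q_apply(2) unfolding S_J_iff_allowed
  by (metis allowed_between)

lemma vert_in_edge_of_midpoint:
  assumes "r \<in> S_J J" "s \<in> S_J J" "midpoint (vert r) (vert s) \<in> edge"
  shows "vert r \<in> edge"
  using face_of_midpoint_mem[OF edge_face vert_in_Br vert_in_Br] assms .

lemma position_between_if_value_between:
  assumes "p a < p c" "p c < p b"
  shows "p a < c \<and> c < p b"
proof (rule ccontr)
  assume outside: "\<not> (p a < c \<and> c < p b)"
  have c: "c \<noteq> a" "c \<noteq> b" using assms by auto
  have "allowed J c (p c)" using p_in_S_J by (simp add: S_J_iff_allowed)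
  then have allowed_c: "allowed J c (p a)" "allowed J c (p b)"
    using outside assms values_less unfolding allowed_def by auto
  define I C L where "I = real (num (p a))" "C = real (num (p c))" "L = real (num (p b))"
  have "I < C" "C < L"
    using assms strict_mono_less[OF strict_mono_num] unfolding I_C_L_def by auto
  define u where "u = (L - C) / (L - I)"
  have u: "0 < u" "u < 1" and u_balance: "u * (C - I) + (1 - u) * (C - L) = 0"
    using \<open>I < C\<close> \<open>C < L\<close> unfolding u_def by (auto simp: field_simps)
  define r s r' s' where "r = p \<circ> Transposition.transpose a c" "s = q \<circ> Transposition.transpose b c"
    "r' = p \<circ> Transposition.transpose b c" "s' = q \<circ> Transposition.transpose a c"
  have S_J: "r \<in> S_J J" "s \<in> S_J J" "r' \<in> S_J J" "s' \<in> S_J J"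
    unfolding r_s_r'_s'_def using assms c allowed_c
    by (auto intro!: S_J_comp_transpose p_in_S_J q_in_S_J allowed_a allowed_b simp: q_apply less_imp_le)
  have "u *\<^sub>R midpoint (vert r) (vert s) + (1 - u) *\<^sub>R midpoint (vert r') (vert s')
      = midpoint (vert p) (vert q)"
    unfolding r_s_r'_s'_def vert_comp_transpose q_apply(1,2) q_apply(3)[OF c]
    using midpoint_shifted_combination2[OF u_balance] by (simp add: I_C_L_def)
  then have "u *\<^sub>R midpoint (vert r) (vert s) + (1 - u) *\<^sub>R midpoint (vert r') (vert s') \<in> edge"
    by simp
  then have "midpoint (vert r) (vert s) \<in> edge"
    by (rule face_of_convex_combination_mem[OF edge_face
          midpoint_vert_in_Br[OF S_J(1,2)] midpoint_vert_in_Br[OF S_J(3,4)] u])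
  then have "vert r \<in> edge" using vert_in_edge_of_midpoint S_J by blast
  moreover have "vert r \<notin> edge"
    using q_apply(3)[OF c] c assms
    by (intro vert_notin_closed_segment[of q c]) (auto simp: r_s_r'_s'_def Transposition.transpose_def)
  ultimately show False by blast
qed

lemma no_crossing_between:
  assumes "y \<le> p x" "p x < p y" "p y \<le> x" "p a < p x" "p y < p b"
  shows False
proof -
  have xy: "x \<noteq> a" "x \<noteq> b" "y \<noteq> a" "y \<noteq> b" "x \<noteq> y" using assms by auto
  have "allowed J x (p x)" "allowed J y (p y)" using p_in_S_J by (simp_all add: S_J_iff_allowed)
  then have "x \<notin> J" "y \<in> J" using assms unfolding allowed_def by auto
  then have allowed_xy: "allowed J x (p a)" "allowed J x (p y)" "allowed J y (p b)" "allowed J y (p x)"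
    using assms unfolding allowed_def by auto
  define I X Z L where "I = real (num (p a))" "X = real (num (p x))"
    "Z = real (num (p y))" "L = real (num (p b))"
  have "I < X" "X < Z" "Z < L"
    using assms strict_mono_less[OF strict_mono_num] unfolding I_X_Z_L_def by auto
  obtain w1 w2 w3 :: real where w: "0 < w1" "0 < w2" "0 < w3" "w1 + w2 + w3 = 1"
    and balance: "w1 * (X - I) = w3 * (Z - X)" "w2 * (L - Z) = w3 * (Z - X)"
    by (rule inverse_proportional_weights[of "X - I" "L - Z" "Z - X"])
      (use \<open>I < X\<close> \<open>X < Z\<close> \<open>Z < L\<close> in simp_all)
  have balance_y: "w2 * (Z - L) = - (w3 * (Z - X))"
    using balance(2) by (metis minus_diff_eq mult_minus_right)
  define rx sx ry sy t t' where
    "rx = p \<circ> Transposition.transpose a x" "sx = q \<circ> Transposition.transpose b x"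
    "ry = p \<circ> Transposition.transpose b y" "sy = q \<circ> Transposition.transpose a y"
    "t = p \<circ> Transposition.transpose x y" "t' = q \<circ> Transposition.transpose x y"
  have S_J: "rx \<in> S_J J" "sx \<in> S_J J" "ry \<in> S_J J" "sy \<in> S_J J" "t \<in> S_J J" "t' \<in> S_J J"
    unfolding rx_sx_ry_sy_t_t'_def using assms xy allowed_xy
    by (auto intro!: S_J_comp_transpose p_in_S_J q_in_S_J allowed_a allowed_b simp: q_apply less_imp_le)
  have "w1 *\<^sub>R midpoint (vert rx) (vert sx) + w2 *\<^sub>R midpoint (vert ry) (vert sy)
      + w3 *\<^sub>R midpoint (vert t) (vert t') = midpoint (vert p) (vert q)"
    unfolding rx_sx_ry_sy_t_t'_def vert_comp_transpose q_apply(1,2) q_apply(3)[OF xy(1,2)]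
      q_apply(3)[OF xy(3,4)]
    using midpoint_shifted_combination3[OF w(4) balance(1) balance_y] by (simp add: I_X_Z_L_def)
  then have "midpoint (vert rx) (vert sx) \<in> edge"
    using face_of_convex_combination3_mem[OF edge_face convex_Br midpoint_vert_in_Br[OF S_J(1,2)]
        midpoint_vert_in_Br[OF S_J(3,4)] midpoint_vert_in_Br[OF S_J(5,6)] w]
    by simp
  then have "vert rx \<in> edge" using vert_in_edge_of_midpoint S_J by blast
  moreover have "vert rx \<notin> edge"
    using q_apply(3)[OF xy(1,2)] xy assms
    by (intro vert_notin_closed_segment[of q x]) (auto simp: rx_sx_ry_sy_t_t'_def Transposition.transpose_def)
  ultimately show False by blast
qed

end

theorem proposition4p6:
  fixes J :: "'n::{finite,linorder} set" and p q :: "'n \<Rightarrow> 'n" and i l :: 'n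
  assumes "p \<in> S_J J" and "q \<in> S_J J"
    and "i < l"
    and "q = Transposition.transpose i l \<circ> p"
    and "joined_by_edge (Br J) (vert p) (vert q)"
  shows "\<forall>k. i < k \<and> k < l \<longrightarrow> p k = k \<and> q k = k"
proof (intro allI impI)
  fix k
  assume k: "i < k \<and> k < l"
  have bij: "bij p" using assms(1) unfolding S_J_def by (auto intro: permutes_bij)
  define a b where "a = inv p i" and "b = inv p l"
  have ab: "p a = i" "p b = l" using bij unfolding a_def b_def by (simp_all add: bij_is_surj surj_f_inv_f)
  have "q = p \<circ> Transposition.transpose a b"
    using assms(4) transpose_comp_eq[OF bij] unfolding a_def b_def by simp
  then interpret transposition_edge J p a b
    using assms(1,2,3,5) ab by unfold_locales (simp_all add: joined_by_edge_def)
  have "p -` {i<..<l} = {i<..<l}"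
    using position_between_if_value_between ab by (intro bij_vimage_subset_imp_eq bij) auto
  have "p k = k"
  proof (rule ccontr)
    assume "p k \<noteq> k"
    then obtain x y where "p x \<in> {i<..<l}" "p y \<in> {i<..<l}" "y \<le> p x" "p x < p y" "p y \<le> x"
      using permutation_crossing_pair[OF bij finite \<open>p -` {i<..<l} = {i<..<l}\<close>] k by auto
    then show False
      using no_crossing_between ab by auto
  qed
  then show "p k = k \<and> q k = k" using k by (auto simp: assms(4) Transposition.transpose_def)
qed

end
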